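(* Let $k\ge 1$ be an integer. Then (i) for each $n\ge 1$, $\chi_{\mu_k}(P_n)=\lceil n/2\rceil$; and (ii) for each $n\ge 3$, $\chi_{\mu_k}(C_n)=\lceil n/3\rceil$ if $n\le 3k$, and $\chi_{\mu_k}(C_n)=\lceil n/2\rceil$ otherwise.
   Context: $P_n$ and $C_n$ denote the path and cycle on $n$ vertices. A $u,v$-geodesic is a shortest $u,v$-path. For a positive integer $k$, a set $M\subseteq V(G)$ is a $k$-distance mutual-visibility set if for every two vertices $u,v\in M$ there exists a $u,v$-geodesic of length at most $k$ none of whose internal vertices lies in $M$. $\chi_{\mu_k}(G)$ is the minimum cardinality of a partition of $V(G)$ into $k$-distance mutual-visibility sets. *)

theory Defs
  imports Main
begin

text \<open>A graph is given by a vertex set V and a (symmetric, irreflexive) adjacency relation E.\<close>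

definition is_walk :: "'a set \<Rightarrow> ('a \<Rightarrow> 'a \<Rightarrow> bool) \<Rightarrow> 'a list \<Rightarrow> 'a \<Rightarrow> 'a \<Rightarrow> bool" where
  "is_walk V E p u v \<longleftrightarrow> p \<noteq> [] \<and> hd p = u \<and> last p = v \<and> set p \<subseteq> V \<and>
     (\<forall>i. Suc i < length p \<longrightarrow> E (p ! i) (p ! Suc i))"

definition walk_len :: "'a list \<Rightarrow> nat" where
  "walk_len p = length p - 1"

definition gdist :: "'a set \<Rightarrow> ('a \<Rightarrow> 'a \<Rightarrow> bool) \<Rightarrow> 'a \<Rightarrow> 'a \<Rightarrow> nat" where
  "gdist V E u v = (LEAST d. \<exists>p. is_walk V E p u v \<and> walk_len p = d)"

definition is_geodesic :: "'a set \<Rightarrow> ('a \<Rightarrow> 'a \<Rightarrow> bool) \<Rightarrow> 'a list \<Rightarrow> 'a \<Rightarrow> 'a \<Rightarrow> bool" where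
  "is_geodesic V E p u v \<longleftrightarrow> is_walk V E p u v \<and> walk_len p = gdist V E u v"

definition internal :: "'a list \<Rightarrow> 'a set" where
  "internal p = set (butlast (tl p))"

definition k_dist_mv_set :: "nat \<Rightarrow> 'a set \<Rightarrow> ('a \<Rightarrow> 'a \<Rightarrow> bool) \<Rightarrow> 'a set \<Rightarrow> bool" where
  "k_dist_mv_set k V E M \<longleftrightarrow> M \<subseteq> V \<and>
     (\<forall>u\<in>M. \<forall>v\<in>M. u \<noteq> v \<longrightarrow>
        (\<exists>p. is_geodesic V E p u v \<and> walk_len p \<le> k \<and> internal p \<inter> M = {}))"

definition is_partition :: "'a set \<Rightarrow> 'a set set \<Rightarrow> bool" where
  "is_partition V P \<longleftrightarrow> \<Union>P = V \<and> (\<forall>X\<in>P. X \<noteq> {}) \<and>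
     (\<forall>X\<in>P. \<forall>Y\<in>P. X \<noteq> Y \<longrightarrow> X \<inter> Y = {})"

definition chi_mu :: "nat \<Rightarrow> 'a set \<Rightarrow> ('a \<Rightarrow> 'a \<Rightarrow> bool) \<Rightarrow> nat" where
  "chi_mu k V E = (LEAST n. \<exists>P. is_partition V P \<and> finite P \<and> card P = n \<and>
       (\<forall>X\<in>P. k_dist_mv_set k V E X))"

definition path_V :: "nat \<Rightarrow> nat set" where "path_V n = {0..<n}"
definition path_E :: "nat \<Rightarrow> nat \<Rightarrow> bool" where "path_E i j \<longleftrightarrow> Suc i = j \<or> Suc j = i"

definition cycle_V :: "nat \<Rightarrow> nat set" where "cycle_V n = {0..<n}"
definition cycle_E :: "nat \<Rightarrow> nat \<Rightarrow> nat \<Rightarrow> bool" where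
  "cycle_E n i j \<longleftrightarrow> Suc i mod n = j \<or> Suc j mod n = i"

end

theory Submission
  imports Defs
begin

text \<open>
  A k-distance mutual-visibility set X of P_n has at most two vertices: a walk between the
  outer two of three vertices of X must pass through the middle one. On C_n the same separation
  argument bounds X by three vertices, since a walk between the first and the third of four
  vertices must pass through the second or the fourth. If moreover n > 3k, then X has at most
  two vertices: for three vertices a < b < c of X, the three connecting walks, each avoiding the
  remaining vertex, run along the three arcs between them, whose lengths add up to n, so one of
  them is longer than k. These bounds give the lower bounds ceiling(n/2) and ceiling(n/3).
  Conversely the pairs {2i, 2i+1} always form an admissible partition, and for n <= 3k so do
  the residue classes modulo m = ceiling(n/3): cyclically consecutive members of a class are at
  most m <= k apart along an arc of at most half the cycle, which is therefore a geodesic.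
\<close>

lemma walk_len_ge_potential_diff:
  fixes f :: "'a \<Rightarrow> int"
  assumes walk: "is_walk V E p u v"
    and step: "\<And>x y. x \<in> set p \<Longrightarrow> y \<in> set p \<Longrightarrow> E x y \<Longrightarrow> \<bar>f y - f x\<bar> \<le> 1"
  shows "\<bar>f v - f u\<bar> \<le> int (walk_len p)"
proof -
  have "\<bar>f (p ! i) - f u\<bar> \<le> int i" if "i < length p" for i
    using that
  proof (induction i)
    case 0
    then show ?case
      using walk by (simp add: is_walk_def hd_conv_nth)
  next
    case (Suc i)
    have "\<bar>f (p ! Suc i) - f (p ! i)\<bar> \<le> 1"
      using step walk Suc.prems by (simp add: is_walk_def)
    with Suc show ?case
      by simp
  qed
  moreover have "v = p ! (length p - 1)" "p \<noteq> []"
    using walk unfolding is_walk_def by (metis last_conv_nth)+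
  ultimately show ?thesis
    by (simp add: walk_len_def)
qed

lemma walk_last_in_closed_set:
  assumes walk: "is_walk V E p u v" and "u \<in> R"
    and closed: "\<And>x y. x \<in> R \<Longrightarrow> x \<in> set p \<Longrightarrow> y \<in> set p \<Longrightarrow> E x y \<Longrightarrow> y \<in> R"
  shows "v \<in> R"
proof -
  have "p ! i \<in> R" if "i < length p" for i
    using that
  proof (induction i)
    case 0
    then show ?case
      using walk \<open>u \<in> R\<close> by (simp add: is_walk_def hd_conv_nth)
  next
    case (Suc i)
    then show ?case
      using closed walk by (simp add: is_walk_def)
  qed
  moreover have "v = p ! (length p - 1)" "p \<noteq> []"
    using walk unfolding is_walk_def by (metis last_conv_nth)+
  ultimately show ?thesis
    by simp
qed

lemma set_subset_ends_internal: "set p \<subseteq> {hd p, last p} \<union> internal p"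
proof (cases p)
  case (Cons x xs)
  show ?thesis
  proof (cases "xs = []")
    case False
    then have "set xs = insert (last xs) (set (butlast xs))"
      by (induction xs rule: rev_induct) auto
    with Cons False show ?thesis
      by (auto simp: internal_def)
  qed (simp add: Cons)
qed simp

lemma internal_rev: "internal (rev p) = internal p"
proof -
  have "tl (rev p) = rev (butlast p)"
    by (metis butlast_rev rev_rev_ident)
  then show ?thesis
    by (simp add: internal_def butlast_tl)
qed

lemma walk_rev:
  assumes "is_walk V E p u v" and sym: "\<And>x y. E x y \<Longrightarrow> E y x"
  shows "is_walk V E (rev p) v u"
  unfolding is_walk_def
proof (intro conjI allI impI)
  fix i assume i: "Suc i < length (rev p)"
  then have "E (p ! (length p - Suc (Suc i))) (p ! Suc (length p - Suc (Suc i)))"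
    using assms(1) by (simp add: is_walk_def)
  then have "E (rev p ! Suc i) (rev p ! i)"
    using i by (simp add: rev_nth Suc_diff_Suc)
  then show "E (rev p ! i) (rev p ! Suc i)"
    by (rule sym)
qed (use assms(1) in \<open>auto simp: is_walk_def hd_rev last_rev\<close>)

lemma geodesicI:
  assumes "is_walk V E p u v" and "\<And>q. is_walk V E q u v \<Longrightarrow> walk_len p \<le> walk_len q"
  shows "is_geodesic V E p u v"
  using assms unfolding is_geodesic_def gdist_def
  by (auto intro!: Least_equality[symmetric])

lemma geodesic_le:
  assumes "is_geodesic V E p u v" and "is_walk V E q u v"
  shows "walk_len p \<le> walk_len q"
  using assms unfolding is_geodesic_def gdist_def by (auto intro: Least_le)

lemma geodesic_rev:
  assumes geo: "is_geodesic V E p u v" and sym: "\<And>x y. E x y \<Longrightarrow> E y x"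
  shows "is_geodesic V E (rev p) v u"
proof (rule geodesicI)
  show "is_walk V E (rev p) v u"
    using geo sym walk_rev unfolding is_geodesic_def by metis
  fix q assume "is_walk V E q v u"
  then have "walk_len p \<le> walk_len (rev q)"
    using geo sym by (metis geodesic_le walk_rev)
  then show "walk_len (rev p) \<le> walk_len q"
    by (simp add: walk_len_def)
qed

lemma edge_is_geodesic:
  assumes "E u v" "u \<in> V" "v \<in> V" "u \<noteq> v"
  shows "is_geodesic V E [u, v] u v"
proof (rule geodesicI)
  show "is_walk V E [u, v] u v"
    using assms by (auto simp: is_walk_def less_Suc_eq)
  fix q assume q: "is_walk V E q u v"
  have "length q \<noteq> 1"
  proof
    assume "length q = 1"
    then obtain x where "q = [x]"
      by (cases q) auto
    with q \<open>u \<noteq> v\<close> show False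
      by (auto simp: is_walk_def)
  qed
  moreover have "length q \<noteq> 0"
    using q by (simp add: is_walk_def)
  ultimately show "walk_len [u, v] \<le> walk_len q"
    unfolding walk_len_def by (cases q) (auto simp: Suc_le_eq)
qed

lemma k_dist_mv_set_walk:
  assumes "k_dist_mv_set k V E X" "u \<in> X" "v \<in> X" "u \<noteq> v"
  obtains p where "is_walk V E p u v" "walk_len p \<le> k" "set p \<inter> X \<subseteq> {u, v}"
proof -
  obtain p where "is_geodesic V E p u v" "walk_len p \<le> k" "internal p \<inter> X = {}"
    using assms unfolding k_dist_mv_set_def by blast
  moreover have "set p \<inter> X \<subseteq> {u, v}" if "is_walk V E p u v" "internal p \<inter> X = {}"
    using that set_subset_ends_internal[of p] by (auto simp: is_walk_def)
  ultimately show thesis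
    using that unfolding is_geodesic_def by blast
qed

lemma clique_k_dist_mv_set:
  assumes "X \<subseteq> V" "\<And>u v. u \<in> X \<Longrightarrow> v \<in> X \<Longrightarrow> u \<noteq> v \<Longrightarrow> E u v" "1 \<le> k"
  shows "k_dist_mv_set k V E X"
  unfolding k_dist_mv_set_def
proof (intro conjI ballI impI)
  fix u v assume "u \<in> X" "v \<in> X" "u \<noteq> v"
  with assms have "is_geodesic V E [u, v] u v"
    by (intro edge_is_geodesic) auto
  with \<open>1 \<le> k\<close> show "\<exists>p. is_geodesic V E p u v \<and> walk_len p \<le> k \<and> internal p \<inter> X = {}"
    by (intro exI[of _ "[u, v]"]) (simp add: walk_len_def internal_def)
qed (fact assms(1))

lemma k_dist_mv_set_wlog_less:
  fixes M :: "'a::linorder set"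
  assumes "M \<subseteq> V" and sym: "\<And>x y. E x y \<Longrightarrow> E y x"
    and less: "\<And>u v. u \<in> M \<Longrightarrow> v \<in> M \<Longrightarrow> u < v \<Longrightarrow>
        \<exists>p. is_geodesic V E p u v \<and> walk_len p \<le> k \<and> internal p \<inter> M = {}"
  shows "k_dist_mv_set k V E M"
  unfolding k_dist_mv_set_def
proof (intro conjI ballI impI)
  fix u v assume uv: "u \<in> M" "v \<in> M" "u \<noteq> v"
  show "\<exists>p. is_geodesic V E p u v \<and> walk_len p \<le> k \<and> internal p \<inter> M = {}"
  proof (cases "u < v")
    case False
    with uv less obtain p where "is_geodesic V E p v u" "walk_len p \<le> k" "internal p \<inter> M = {}"
      by (metis linorder_neqE)
    then show ?thesis
      using geodesic_rev[OF _ sym] by (intro exI[of _ "rev p"]) (simp add: internal_rev walk_len_def)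
  qed (use uv less in blast)
qed (fact assms(1))

lemma is_partition_fibres:
  assumes "f ` V = I"
  shows "is_partition V ((\<lambda>i. {x \<in> V. f x = i}) ` I)"
  using assms unfolding is_partition_def by auto

lemma card_fibres:
  assumes "f ` V = I" "finite I"
  shows "card ((\<lambda>i. {x \<in> V. f x = i}) ` I) = card I"
  using assms by (intro card_image inj_onI) blast

lemma card_le_if_no_sorted_list:
  fixes X :: "'a::linorder set"
  assumes "finite X"
    and "\<And>xs. length xs = Suc c \<Longrightarrow> sorted_wrt (<) xs \<Longrightarrow> set xs \<subseteq> X \<Longrightarrow> False"
  shows "card X \<le> c"
proof (rule ccontr)
  assume "\<not> card X \<le> c"
  then show False
    using assms(2)[of "take (Suc c) (sorted_list_of_set X)"] assms(1)
    by (auto simp: set_take_subset[THEN subset_trans])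
qed

lemma chi_mu_eq_ceiling:
  assumes "finite V" "0 < c"
    and P: "is_partition V P" "finite P" "card P = (card V + c - 1) div c"
      "\<forall>X\<in>P. k_dist_mv_set k V E X"
    and card_le: "\<And>X. k_dist_mv_set k V E X \<Longrightarrow> card X \<le> c"
  shows "chi_mu k V E = (card V + c - 1) div c"
  unfolding chi_mu_def
proof (rule Least_equality)
  fix m assume "\<exists>Q. is_partition V Q \<and> finite Q \<and> card Q = m \<and> (\<forall>X\<in>Q. k_dist_mv_set k V E X)"
  then obtain Q where Q: "is_partition V Q" "finite Q" "card Q = m" "\<forall>X\<in>Q. k_dist_mv_set k V E X"
    by blast
  have "card V \<le> sum card Q"
    using card_Union_le_sum_card[of Q] Q(1) by (simp add: is_partition_def)
  also have "\<dots> \<le> m * c"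
    using sum_bounded_above[of Q card c] card_le Q(3,4) by simp
  finally have "card V + c - 1 < Suc m * c"
    using \<open>0 < c\<close> by simp
  then show "(card V + c - 1) div c \<le> m"
    using less_mult_imp_div_less[of "card V + c - 1" "Suc m" c] by simp
qed (use P in blast)

lemma chi_mu_eq_half_ceiling:
  assumes "1 \<le> k" "\<And>x. Suc x < n \<Longrightarrow> E x (Suc x) \<and> E (Suc x) x"
    and card_le: "\<And>X. k_dist_mv_set k {0..<n} E X \<Longrightarrow> card X \<le> 2"
  shows "chi_mu k {0..<n} E = (n + 1) div 2"
proof -
  have img: "(\<lambda>x. x div 2) ` {0..<n} = {..<(n + 1) div 2}"
  proof
    show "{..<(n + 1) div 2} \<subseteq> (\<lambda>x. x div 2) ` {0..<n}"
    proof
      fix i assume "i \<in> {..<(n + 1) div 2}"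
      then have "2 * i \<in> {0..<n}" "i = 2 * i div 2"
        by auto
      then show "i \<in> (\<lambda>x. x div 2) ` {0..<n}"
        by blast
    qed
  qed auto
  let ?P = "(\<lambda>i. {x \<in> {0..<n}. x div 2 = i}) ` {..<(n + 1) div 2}"
  have "\<forall>X\<in>?P. k_dist_mv_set k {0..<n} E X"
  proof
    fix X assume "X \<in> ?P"
    then obtain i where X: "X = {x \<in> {0..<n}. x div 2 = i}"
      by blast
    show "k_dist_mv_set k {0..<n} E X"
    proof (rule clique_k_dist_mv_set)
      fix x y assume "x \<in> X" "y \<in> X" "x \<noteq> y"
      then have "Suc x = y \<and> Suc x < n \<or> Suc y = x \<and> Suc y < n"
        unfolding X by auto
      then show "E x y"
        using assms(2) by auto
    qed (use X \<open>1 \<le> k\<close> in auto)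
  qed
  then have "chi_mu k {0..<n} E = (card {0..<n} + 2 - 1) div 2"
  proof (intro chi_mu_eq_ceiling)
    show "is_partition {0..<n} ?P"
      using img by (rule is_partition_fibres)
    show "card ?P = (card {0..<n} + 2 - 1) div 2"
      using card_fibres[OF img] by simp
  qed (use card_le in auto)
  then show ?thesis
    by simp
qed

lemma card_le_2_path_mv:
  assumes mv: "k_dist_mv_set k (path_V n) path_E X"
  shows "card X \<le> 2"
proof (rule card_le_if_no_sorted_list)
  show "finite X"
    using mv finite_subset by (auto simp: k_dist_mv_set_def path_V_def)
  fix xs :: "nat list"
  assume "length xs = Suc 2" "sorted_wrt (<) xs" "set xs \<subseteq> X"
  then obtain a b c where "a < b" "b < c" "a \<in> X" "b \<in> X" "c \<in> X"
    by (auto simp: numeral_2_eq_2 length_Suc_conv)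
  moreover have "a \<noteq> c"
    using \<open>a < b\<close> \<open>b < c\<close> by simp
  ultimately obtain p where p: "is_walk (path_V n) path_E p a c" "set p \<inter> X \<subseteq> {a, c}"
    using k_dist_mv_set_walk[OF mv] by metis
  have "c \<in> {x. x < b}"
  proof (rule walk_last_in_closed_set[OF p(1)])
    fix x y assume "x \<in> {x. x < b}" "x \<in> set p" "y \<in> set p" "path_E x y"
    moreover have "y \<noteq> b"
      using p(2) \<open>y \<in> set p\<close> \<open>b \<in> X\<close> \<open>a < b\<close> \<open>b < c\<close> by auto
    ultimately show "y \<in> {x. x < b}"
      by (auto simp: path_E_def)
  qed (use \<open>a < b\<close> in simp)
  with \<open>b < c\<close> show False
    by simp
qed

lemma chi_mu_path:
  assumes "1 \<le> k"
  shows "chi_mu k (path_V n) path_E = (n + 1) div 2"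
  using assms card_le_2_path_mv unfolding path_V_def
  by (intro chi_mu_eq_half_ceiling) (auto simp: path_E_def)

lemma Suc_mod_eq_if:
  fixes z n :: nat
  assumes "z < n"
  shows "Suc z mod n = (if Suc z < n then Suc z else 0)"
proof (cases "Suc z < n")
  case False
  with assms have "n = Suc z"
    by simp
  then show ?thesis
    by simp
qed simp

lemma mod_neq_if_close:
  fixes a b m :: nat
  assumes "a < b" "b < a + m"
  shows "a mod m \<noteq> b mod m"
proof
  assume "a mod m = b mod m"
  then have "m dvd b - a"
    using assms(1) mod_eq_dvd_iff_nat[of a b m] by simp
  with assms show False
    using dvd_imp_le[of m "b - a"] by linarith
qed

lemma mod_eq_less_triple_cases:
  fixes u v m :: nat
  assumes "u mod m = v mod m" "u < v" "v < 3 * m"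
  shows "v = u + m \<or> v = u + 2 * m"
proof -
  obtain t where t: "v - u = m * t"
    using assms(1,2) mod_eq_dvd_iff_nat[of u v m] by (auto elim: dvdE)
  have "t \<noteq> 0"
    using t \<open>u < v\<close> by (cases t) auto
  moreover have "t < 3"
  proof (rule ccontr)
    assume "\<not> t < 3"
    then have "m * 3 \<le> m * t"
      by simp
    with t \<open>v < 3 * m\<close> show False
      by linarith
  qed
  ultimately have "t = 1 \<or> t = 2"
    by auto
  with t \<open>u < v\<close> show ?thesis
    by auto
qed

lemma cycle_E_cases:
  assumes "cycle_E n x y"
  obtains "y = Suc x mod n" | "x = Suc y mod n"
  using assms unfolding cycle_E_def by auto

lemma cycle_E_sym: "cycle_E n x y \<Longrightarrow> cycle_E n y x"
  unfolding cycle_E_def by auto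

lemma card_le_3_cycle_mv:
  assumes mv: "k_dist_mv_set k (cycle_V n) (cycle_E n) X"
  shows "card X \<le> 3"
proof (rule card_le_if_no_sorted_list)
  show "finite X"
    using mv finite_subset by (auto simp: k_dist_mv_set_def cycle_V_def)
  fix xs :: "nat list"
  assume "length xs = Suc 3" "sorted_wrt (<) xs" "set xs \<subseteq> X"
  then obtain a b c d where "a < b" "b < c" "c < d" "a \<in> X" "b \<in> X" "c \<in> X" "d \<in> X"
    by (auto simp: numeral_3_eq_3 length_Suc_conv)
  moreover have "a \<noteq> c"
    using \<open>a < b\<close> \<open>b < c\<close> by simp
  ultimately obtain p where p: "is_walk (cycle_V n) (cycle_E n) p a c" "set p \<inter> X \<subseteq> {a, c}"
    using k_dist_mv_set_walk[OF mv] by metis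
  have "d < n"
    using mv \<open>d \<in> X\<close> by (auto simp: k_dist_mv_set_def cycle_V_def)
  have "c \<in> {x. x < b \<or> d < x}"
  proof (rule walk_last_in_closed_set[OF p(1)])
    fix x y assume x: "x \<in> {x. x < b \<or> d < x}" "x \<in> set p" and y: "y \<in> set p"
      and "cycle_E n x y"
    have "y \<noteq> b" "y \<noteq> d" "x < n" "y < n"
      using p x y \<open>b \<in> X\<close> \<open>d \<in> X\<close> \<open>a < b\<close> \<open>b < c\<close> \<open>c < d\<close>
      by (auto simp: is_walk_def cycle_V_def)
    from \<open>cycle_E n x y\<close> show "y \<in> {x. x < b \<or> d < x}"
    proof (cases rule: cycle_E_cases)
      case 1
      with \<open>x < n\<close> \<open>y \<noteq> b\<close> x(1) \<open>a < b\<close> show ?thesis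
        by (auto simp: Suc_mod_eq_if split: if_splits)
    next
      case 2
      with \<open>y < n\<close> \<open>y \<noteq> d\<close> x(1) \<open>d < n\<close> show ?thesis
        by (auto simp: Suc_mod_eq_if split: if_splits)
    qed
  qed (use \<open>a < b\<close> in simp)
  with \<open>b < c\<close> \<open>c < d\<close> show False
    by simp
qed

definition cycle_fwd_dist :: "nat \<Rightarrow> nat \<Rightarrow> nat \<Rightarrow> nat" where
  "cycle_fwd_dist n u x = (if u \<le> x then x - u else x + n - u)"

definition cycle_dist :: "nat \<Rightarrow> nat \<Rightarrow> nat \<Rightarrow> nat" where
  "cycle_dist n u x = min (cycle_fwd_dist n u x) (cycle_fwd_dist n x u)"

lemma cycle_fwd_dist_step:
  assumes "u < n" "x < n" "y < n" "cycle_E n x y" "x \<noteq> u" "y \<noteq> u"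
  shows "\<bar>int (cycle_fwd_dist n u y) - int (cycle_fwd_dist n u x)\<bar> \<le> 1"
proof -
  have step: "\<bar>int (cycle_fwd_dist n u (Suc z mod n)) - int (cycle_fwd_dist n u z)\<bar> \<le> 1"
    if "z < n" "Suc z mod n \<noteq> u" for z
  proof (cases "Suc z < n")
    case True
    with that show ?thesis
      by (cases "u \<le> z") (auto simp: cycle_fwd_dist_def)
  next
    case False
    with that \<open>u < n\<close> show ?thesis
      by (simp add: Suc_mod_eq_if cycle_fwd_dist_def)
  qed
  from assms(4) show ?thesis
  proof (cases rule: cycle_E_cases)
    case 1
    then show ?thesis
      using step[of x] assms by simp
  next
    case 2
    then show ?thesis
      using step[of y] assms by (simp add: abs_minus_commute)
  qed
qed

lemma cycle_dist_step:
  assumes "u < n" "x < n" "y < n" "cycle_E n x y"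
  shows "\<bar>int (cycle_dist n u y) - int (cycle_dist n u x)\<bar> \<le> 1"
proof -
  have step: "\<bar>int (cycle_dist n u (Suc z mod n)) - int (cycle_dist n u z)\<bar> \<le> 1"
    if "z < n" for z
  proof (cases "Suc z < n")
    case True
    with \<open>u < n\<close> show ?thesis
      by (cases "u \<le> z") (auto simp: cycle_dist_def cycle_fwd_dist_def min_def)
  next
    case False
    with that have "Suc z = n"
      by simp
    with \<open>u < n\<close> show ?thesis
      by (auto simp: cycle_dist_def cycle_fwd_dist_def min_def)
  qed
  from assms(4) show ?thesis
  proof (cases rule: cycle_E_cases)
    case 1
    then show ?thesis
      using step[of x] assms by simp
  next
    case 2
    then show ?thesis
      using step[of y] assms by (simp add: abs_minus_commute)
  qed
qed

lemma cycle_walk_avoiding_len_ge: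
  assumes "is_walk (cycle_V n) (cycle_E n) p u v" "c \<notin> set p" "c < n"
  shows "\<bar>int (cycle_fwd_dist n c v) - int (cycle_fwd_dist n c u)\<bar> \<le> int (walk_len p)"
proof (rule walk_len_ge_potential_diff[OF assms(1)])
  fix x y assume "x \<in> set p" "y \<in> set p" "cycle_E n x y"
  with assms show "\<bar>int (cycle_fwd_dist n c y) - int (cycle_fwd_dist n c x)\<bar> \<le> 1"
    by (intro cycle_fwd_dist_step) (auto simp: is_walk_def cycle_V_def)
qed

lemma cycle_walk_len_ge:
  assumes "is_walk (cycle_V n) (cycle_E n) p u v"
  shows "cycle_dist n u v \<le> walk_len p"
proof -
  have "u < n"
    using assms hd_in_set by (fastforce simp: is_walk_def cycle_V_def)
  have "\<bar>int (cycle_dist n u v) - int (cycle_dist n u u)\<bar> \<le> int (walk_len p)"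
  proof (rule walk_len_ge_potential_diff[OF assms])
    fix x y assume "x \<in> set p" "y \<in> set p" "cycle_E n x y"
    with assms \<open>u < n\<close> show "\<bar>int (cycle_dist n u y) - int (cycle_dist n u x)\<bar> \<le> 1"
      by (intro cycle_dist_step) (auto simp: is_walk_def cycle_V_def)
  qed
  then show ?thesis
    by (simp add: cycle_dist_def cycle_fwd_dist_def)
qed

lemma card_le_2_cycle_mv:
  assumes mv: "k_dist_mv_set k (cycle_V n) (cycle_E n) X" and "3 * k < n"
  shows "card X \<le> 2"
proof (rule card_le_if_no_sorted_list)
  show "finite X"
    using mv finite_subset by (auto simp: k_dist_mv_set_def cycle_V_def)
  fix xs :: "nat list"
  assume "length xs = Suc 2" "sorted_wrt (<) xs" "set xs \<subseteq> X"
  then obtain a b c where abc: "a < b" "b < c" "a \<in> X" "b \<in> X" "c \<in> X"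
    by (auto simp: numeral_2_eq_2 length_Suc_conv)
  have "c < n"
    using mv \<open>c \<in> X\<close> by (auto simp: k_dist_mv_set_def cycle_V_def)
  have around: "\<bar>int (cycle_fwd_dist n w y) - int (cycle_fwd_dist n w x)\<bar> \<le> int k"
    if xyw: "x \<in> X" "y \<in> X" "w \<in> X" "x \<noteq> y" "w \<noteq> x" "w \<noteq> y" for x y w
  proof -
    obtain p where p: "is_walk (cycle_V n) (cycle_E n) p x y" "walk_len p \<le> k" "set p \<inter> X \<subseteq> {x, y}"
      using k_dist_mv_set_walk[OF mv xyw(1,2,4)] by metis
    have "w \<notin> set p" "w < n"
      using p(3) xyw mv by (auto simp: k_dist_mv_set_def cycle_V_def)
    with p(2) show ?thesis
      using cycle_walk_avoiding_len_ge[OF p(1)] by fastforce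
  qed
  \<comment> \<open>the three bounds are the lengths of the three arcs into which a, b, c cut the cycle\<close>
  have "int (b - a) \<le> int k"
    using around[of a b c] abc \<open>c < n\<close> by (simp add: cycle_fwd_dist_def)
  moreover have "int (c - b) \<le> int k"
    using around[of b c a] abc by (simp add: cycle_fwd_dist_def)
  moreover have "int (n + a - c) \<le> int k"
    using around[of a c b] abc \<open>c < n\<close> by (simp add: cycle_fwd_dist_def)
  ultimately show False
    using \<open>3 * k < n\<close> abc \<open>c < n\<close> by linarith
qed

lemma chi_mu_cycle_large:
  assumes "1 \<le> k" "3 * k < n"
  shows "chi_mu k (cycle_V n) (cycle_E n) = (n + 1) div 2"
  using assms card_le_2_cycle_mv unfolding cycle_V_def
  by (intro chi_mu_eq_half_ceiling) (auto simp: cycle_E_def)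

definition cycle_walk :: "nat \<Rightarrow> nat \<Rightarrow> nat \<Rightarrow> nat list" where
  "cycle_walk n u L = map (\<lambda>i. (u + i) mod n) [0..<Suc L]"

lemma is_walk_cycle_walk:
  assumes "u < n"
  shows "is_walk (cycle_V n) (cycle_E n) (cycle_walk n u L) u ((u + L) mod n)"
  using assms unfolding is_walk_def cycle_walk_def cycle_V_def cycle_E_def
  by (auto simp: hd_map last_map mod_Suc_eq nth_Cons' simp del: upt_Suc)

lemma walk_len_cycle_walk [simp]: "walk_len (cycle_walk n u L) = L"
  by (simp add: walk_len_def cycle_walk_def)

lemma internal_cycle_walk: "internal (cycle_walk n u L) = (\<lambda>i. (u + i) mod n) ` {1..<L}"
proof -
  have "butlast (tl [0..<Suc L]) = [1..<L]"
    unfolding tl_upt by (cases L) (simp_all add: upt_Suc_append del: upt_Suc)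
  then show ?thesis
    unfolding internal_def cycle_walk_def
    by (simp add: map_tl[symmetric] map_butlast[symmetric] del: upt_Suc)
qed

lemma cycle_walk_is_geodesic:
  assumes "u < n" "2 * L \<le> n"
  shows "is_geodesic (cycle_V n) (cycle_E n) (cycle_walk n u L) u ((u + L) mod n)"
proof (rule geodesicI)
  show "is_walk (cycle_V n) (cycle_E n) (cycle_walk n u L) u ((u + L) mod n)"
    using assms(1) by (rule is_walk_cycle_walk)
  fix q assume "is_walk (cycle_V n) (cycle_E n) q u ((u + L) mod n)"
  then have "cycle_dist n u ((u + L) mod n) \<le> walk_len q"
    by (rule cycle_walk_len_ge)
  moreover have "cycle_dist n u ((u + L) mod n) = L"
  proof (cases "u + L < n")
    case True
    then show ?thesis
      using assms by (simp add: cycle_dist_def cycle_fwd_dist_def)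
  next
    case False
    then have "(u + L) mod n = u + L - n" "u + L - n < u"
      using assms by (simp_all add: mod_if)
    then show ?thesis
      using assms False by (simp add: cycle_dist_def cycle_fwd_dist_def)
  qed
  ultimately show "walk_len (cycle_walk n u L) \<le> walk_len q"
    by simp
qed

lemma internal_cycle_walk_residue:
  assumes "u < n" "L \<le> m" "L \<le> n" "(u + L) mod n mod m = u mod m"
  shows "internal (cycle_walk n u L) \<inter> {x. x mod m = u mod m} = {}"
proof -
  have "(u + i) mod n mod m \<noteq> u mod m" if "0 < i" "i < L" for i
  proof (cases "u + i < n")
    case True
    then show ?thesis
      using mod_neq_if_close[of u "u + i" m] that assms(2) by simp
  next
    case False
    \<comment> \<open>the arc passes vertex 0, so compare with its far end instead of u\<close>
    have "(u + i) mod n = u + i - n" "(u + L) mod n = u + L - n"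
      using that assms(1,3) False le_mod_geq[of n "u + i"] le_mod_geq[of n "u + L"] by simp_all
    then show ?thesis
      using mod_neq_if_close[of "u + i - n" "u + L - n" m] that assms(2,4) False by auto
  qed
  then show ?thesis
    by (auto simp: internal_cycle_walk)
qed

lemma residue_class_k_dist_mv_set:
  assumes "2 * m \<le> n" "n \<le> 3 * m" "m \<le> k"
  shows "k_dist_mv_set k (cycle_V n) (cycle_E n) {x \<in> cycle_V n. x mod m = r}"
    (is "k_dist_mv_set k _ _ ?X")
proof (rule k_dist_mv_set_wlog_less)
  have arc: "\<exists>p. is_geodesic (cycle_V n) (cycle_E n) p x ((x + L) mod n) \<and> walk_len p \<le> k
      \<and> internal p \<inter> ?X = {}"
    if "x \<in> ?X" "(x + L) mod n \<in> ?X" "L \<le> m" for x L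
  proof (intro exI conjI)
    show "is_geodesic (cycle_V n) (cycle_E n) (cycle_walk n x L) x ((x + L) mod n)"
      using that assms by (intro cycle_walk_is_geodesic) (auto simp: cycle_V_def)
    show "walk_len (cycle_walk n x L) \<le> k"
      using that assms by simp
    have "internal (cycle_walk n x L) \<inter> {y. y mod m = x mod m} = {}"
      using that assms by (intro internal_cycle_walk_residue) (auto simp: cycle_V_def)
    then show "internal (cycle_walk n x L) \<inter> ?X = {}"
      using that by auto
  qed
  fix u v assume u: "u \<in> ?X" and v: "v \<in> ?X" and "u < v"
  with assms have "v = u + m \<or> v = u + 2 * m"
    by (intro mod_eq_less_triple_cases) (auto simp: cycle_V_def)
  then show "\<exists>p. is_geodesic (cycle_V n) (cycle_E n) p u v \<and> walk_len p \<le> k \<and> internal p \<inter> ?X = {}"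
  proof
    assume "v = u + m"
    then have "(u + m) mod n = v"
      using v by (simp add: cycle_V_def)
    with arc[of u m] u v show ?thesis
      by auto
  next
    assume "v = u + 2 * m"
    then have "(v + (n - 2 * m)) mod n = u"
      using u assms by (simp add: cycle_V_def)
    moreover have "n - 2 * m \<le> m"
      using assms by simp
    ultimately obtain p
      where "is_geodesic (cycle_V n) (cycle_E n) p v u" "walk_len p \<le> k" "internal p \<inter> ?X = {}"
      using arc[of v "n - 2 * m"] u v by auto
    then show ?thesis
      using geodesic_rev[OF _ cycle_E_sym] by (intro exI[of _ "rev p"]) (simp add: internal_rev walk_len_def)
  qed
qed (auto simp: cycle_E_sym)

lemma chi_mu_cycle_small:
  assumes "3 \<le> n" "n \<le> 3 * k"
  shows "chi_mu k (cycle_V n) (cycle_E n) = (n + 2) div 3"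
proof -
  define m where "m = (n + 2) div 3"
  have m: "0 < m" "m \<le> n" "2 * m \<le> n" "n \<le> 3 * m" "m \<le> k"
    using assms unfolding m_def by auto
  have img: "(\<lambda>x. x mod m) ` cycle_V n = {..<m}"
  proof
    show "{..<m} \<subseteq> (\<lambda>x. x mod m) ` cycle_V n"
    proof
      fix r assume "r \<in> {..<m}"
      then have "r \<in> cycle_V n" "r = r mod m"
        using m by (auto simp: cycle_V_def)
      then show "r \<in> (\<lambda>x. x mod m) ` cycle_V n"
        by blast
    qed
  qed (use m in auto)
  let ?P = "(\<lambda>r. {x \<in> cycle_V n. x mod m = r}) ` {..<m}"
  have "chi_mu k (cycle_V n) (cycle_E n) = (card (cycle_V n) + 3 - 1) div 3"
  proof (rule chi_mu_eq_ceiling)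
    show "is_partition (cycle_V n) ?P"
      using img by (rule is_partition_fibres)
    show "card ?P = (card (cycle_V n) + 3 - 1) div 3"
      using card_fibres[OF img] by (simp add: cycle_V_def m_def)
    show "\<forall>X\<in>?P. k_dist_mv_set k (cycle_V n) (cycle_E n) X"
      using m residue_class_k_dist_mv_set by blast
  qed (auto simp: cycle_V_def intro: card_le_3_cycle_mv)
  then show ?thesis
    by (simp add: cycle_V_def)
qed

theorem proposition2p4:
  fixes k :: nat
  assumes "k \<ge> 1"
  shows "(\<forall>n::nat. n \<ge> 1 \<longrightarrow> chi_mu k (path_V n) path_E = (n + 1) div 2) \<and>
         (\<forall>n::nat. n \<ge> 3 \<longrightarrow>
            chi_mu k (cycle_V n) (cycle_E n) = (if n \<le> 3 * k then (n + 2) div 3 else (n + 1) div 2))"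
  using chi_mu_path chi_mu_cycle_small chi_mu_cycle_large assms by auto

end
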